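(* Let $p,q$ be integers with $2\le q<p$, and let $\tau:\Sigma_q^\ast\to\{-1,0,\ldots,p-2\}$ be a regular mapping. Let \[ \Gamma(\tau)=\{I=i_1i_2\cdots i_{|I|}\in\Sigma_q^\ast: i_{|I|}\ne0\}\cup\{0\} \] (where $0$ denotes the word of length one consisting of the digit $0$). Then the map $\tau^\ast:\Gamma(\tau)\to\Lambda(\tau)$ is a bijection. Furthermore, if $I,J\in\Gamma(\tau)$ are distinct and $I_{1,k}=J_{1,k}$ for some integer $k\ge0$ (the condition being vacuous for $k=0$), then $|\tau^\ast(I)-\tau^\ast(J)|\ge p^k$.
   Context: Let $\Sigma_q=\{0,1,\ldots,q-1\}$, $\Sigma_q^n$ the words of length $n$, and $\Sigma_q^\ast=\bigcup_{n\ge1}\Sigma_q^n$; $|I|$ is the length of $I$. A map $\tau:\Sigma_q^\ast\to\{-1,0,\ldots,p-2\}$ is a regular mapping if (i) $\tau(0^n)=0$ for all $n\ge1$; (ii) $\tau(i_1\cdots i_n)\in i_n+q\mathbb Z$ for every word $i_1\cdots i_n$; (iii) for every $I\in\Sigma_q^\ast$, $\tau(I0^l)=0$ for all sufficiently large $l$. For $I=i_1\cdots i_n\in\Sigma_q^\ast$ and $k\ge1$, let $I_{1,k}=i_1\cdots i_k$ if $k\le n$ and $I_{1,k}=i_1\cdots i_n0^{k-n}$ if $k>n$. Set $\tau^\ast(I)=\sum_{k=1}^\infty \tau(I_{1,k})p^{k-1}$ (a finite sum by (iii)), and $\Lambda(\tau)=\{\tau^\ast(I): I\in\Sigma_q^\ast\}$.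 *)

theory Defs
  imports Main
begin

definition words :: "nat \<Rightarrow> nat list set" where
  "words q = {I. I \<noteq> [] \<and> (\<forall>i\<in>set I. i < q)}"

definition regular_mapping :: "nat \<Rightarrow> nat \<Rightarrow> (nat list \<Rightarrow> int) \<Rightarrow> bool" where
  "regular_mapping p q \<tau> \<longleftrightarrow>
     (\<forall>I\<in>words q. \<tau> I \<in> {-1 .. int p - 2}) \<and>
     (\<forall>n\<ge>1. \<tau> (replicate n 0) = 0) \<and>
     (\<forall>I\<in>words q. \<tau> I mod int q = int (last I) mod int q) \<and>
     (\<forall>I\<in>words q. \<exists>L. \<forall>l\<ge>L. \<tau> (I @ replicate l 0) = 0)"

definition pref :: "nat list \<Rightarrow> nat \<Rightarrow> nat list" where
  "pref I k = take k I @ replicate (k - length I) 0"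

text \<open>tau^*(I) = sum_{k>=1} tau(I_{1,k}) p^(k-1), a finite sum (over the finitely many nonzero terms).\<close>
definition tau_star :: "nat \<Rightarrow> (nat list \<Rightarrow> int) \<Rightarrow> nat list \<Rightarrow> int" where
  "tau_star p \<tau> I = (\<Sum>k\<in>{k. k \<ge> 1 \<and> \<tau> (pref I k) \<noteq> 0}. \<tau> (pref I k) * int p ^ (k - 1))"

definition Lambda :: "nat \<Rightarrow> nat \<Rightarrow> (nat list \<Rightarrow> int) \<Rightarrow> int set" where
  "Lambda p q \<tau> = tau_star p \<tau> ` words q"

definition Gamma :: "nat \<Rightarrow> nat list set" where
  "Gamma q = {I\<in>words q. last I \<noteq> 0} \<union> {[0]}"

end

theory Submission
  imports Defs
begin

text \<open>A word \<open>I\<close> is seen through its infinite, zero-padded digit sequence, on which all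
prefixes \<open>I\<^sub>1\<^sub>,\<^sub>k\<close> (and hence \<open>\<tau>\<^sup>*(I)\<close>) depend. If \<open>I \<noteq> J\<close> in \<open>\<Gamma>(\<tau>)\<close>, these sequences
differ, say first at position \<open>m \<ge> k\<close>. Then \<open>\<tau>\<^sup>*(I) - \<tau>\<^sup>*(J) = \<Sum>\<^sub>j c\<^sub>j p\<^sup>j\<close> with \<open>c\<^sub>j = 0\<close>
for \<open>j < m\<close>, while \<open>c\<^sub>m \<noteq> 0\<close> (the two values of \<open>\<tau>\<close> differ modulo \<open>q\<close>) and \<open>|c\<^sub>m| < p\<close>
(both lie in \<open>{-1,\<dots>,p-2}\<close>). So the difference is a nonzero multiple of \<open>p\<^sup>m\<close>, whence
\<open>|\<tau>\<^sup>*(I) - \<tau>\<^sup>*(J)| \<ge> p\<^sup>m \<ge> p\<^sup>k\<close>. With \<open>k = 0\<close> this gives injectivity; surjectivity onto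
\<open>\<Lambda>(\<tau>)\<close> holds because deleting trailing zeros does not change the digit sequence.\<close>

definition digit :: "nat list \<Rightarrow> nat \<Rightarrow> nat" where
  "digit I j = (if j < length I then I ! j else 0)"

lemma pref_conv_map_digit: "pref I k = map (digit I) [0..<k]"
  by (rule nth_equalityI) (auto simp: pref_def digit_def nth_append min_def)

lemma pref_eq_iff_digit: "pref I k = pref J k \<longleftrightarrow> (\<forall>j<k. digit I j = digit J j)"
  by (auto simp: pref_conv_map_digit map_eq_conv)

lemma last_pref_Suc: "last (pref I (Suc j)) = digit I j"
  by (simp add: pref_conv_map_digit)

lemma last_conv_digit: "I \<noteq> [] \<Longrightarrow> last I = digit I (length I - 1)"
  by (simp add: digit_def last_conv_nth)

lemma digit_append_zero: "digit (I @ [0]) = digit I"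
  by (auto simp: digit_def nth_append fun_eq_iff)

lemma digit_less: "I \<in> words q \<Longrightarrow> 0 < q \<Longrightarrow> digit I j < q"
  by (auto simp: digit_def words_def)

lemma pref_Suc_in_words: "I \<in> words q \<Longrightarrow> 0 < q \<Longrightarrow> pref I (Suc j) \<in> words q"
  using digit_less[of I q] by (auto simp: words_def pref_conv_map_digit)

lemma Gamma_subset_words: "0 < q \<Longrightarrow> Gamma q \<subseteq> words q"
  by (auto simp: Gamma_def words_def)

lemma tau_star_cong_digit: "digit I = digit J \<Longrightarrow> tau_star p \<tau> I = tau_star p \<tau> J"
  by (simp add: tau_star_def pref_conv_map_digit)

lemma Gamma_length_le_if_digit_eq:
  assumes "I \<in> Gamma q" "J \<noteq> []" "digit I = digit J"
  shows "length I \<le> length J"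
proof (rule ccontr)
  assume "\<not> length I \<le> length J"
  moreover have "I \<noteq> []" using assms(1) by (auto simp: Gamma_def words_def)
  ultimately have "last I = digit J (length I - 1)"
    using assms(3) by (simp add: last_conv_digit)
  also have "\<dots> = 0"
    using \<open>\<not> length I \<le> length J\<close> by (auto simp: digit_def)
  finally have "last I = 0" .
  with assms(1) have "I = [0]" by (auto simp: Gamma_def)
  with assms(2) \<open>\<not> length I \<le> length J\<close> show False by (simp add: Suc_le_eq)
qed

lemma Gamma_eq_if_digit_eq:
  assumes "I \<in> Gamma q" "J \<in> Gamma q" "digit I = digit J"
  shows "I = J"
proof -
  have "I \<noteq> []" "J \<noteq> []" using assms(1,2) by (auto simp: Gamma_def words_def)
  then have len: "length I = length J"
    using Gamma_length_le_if_digit_eq assms by (metis le_antisym)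
  show ?thesis
  proof (rule nth_equalityI)
    show "I ! i = J ! i" if "i < length I" for i
      using that len fun_cong[OF assms(3), of i] by (simp add: digit_def)
  qed (rule len)
qed

lemma ex_Gamma_same_digits:
  assumes "I \<in> words q"
  shows "\<exists>I'\<in>Gamma q. digit I' = digit I"
  using assms
proof (induction I rule: rev_induct)
  case Nil
  then show ?case by (simp add: words_def)
next
  case (snoc x xs)
  show ?case
  proof (cases "x = 0 \<and> xs \<noteq> []")
    case True
    with snoc.prems have "xs \<in> words q" by (simp add: words_def)
    with snoc.IH True show ?thesis by (simp add: digit_append_zero)
  next
    case False
    with snoc.prems have "xs @ [x] \<in> Gamma q" by (auto simp: Gamma_def)
    then show ?thesis by blast
  qed
qed

lemma tau_star_eq_sum_lessThan:
  assumes "\<forall>k>N. \<tau> (pref I k) = 0"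
  shows "tau_star p \<tau> I = (\<Sum>j<N. \<tau> (pref I (Suc j)) * int p ^ j)"
proof -
  have "tau_star p \<tau> I = (\<Sum>k\<in>{1..N}. \<tau> (pref I k) * int p ^ (k - 1))"
    unfolding tau_star_def
    by (rule sum.mono_neutral_left) (auto simp: not_less[symmetric] dest: assms[rule_format])
  also have "\<dots> = (\<Sum>j<N. \<tau> (pref I (Suc j)) * int p ^ j)"
    by (simp add: sum.atLeast1_atMost_eq)
  finally show ?thesis .
qed

lemma regular_mapping_eventually_tau_star_eq_sum:
  assumes "regular_mapping p q \<tau>" "I \<in> words q"
  obtains N0 where
    "\<And>N. N \<ge> N0 \<Longrightarrow> tau_star p \<tau> I = (\<Sum>j<N. \<tau> (pref I (Suc j)) * int p ^ j)"
proof -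
  obtain L where L: "\<forall>l\<ge>L. \<tau> (I @ replicate l 0) = 0"
    using assms unfolding regular_mapping_def by blast
  have "\<forall>k>N. \<tau> (pref I k) = 0" if "N \<ge> length I + L" for N
    using L that by (auto simp: pref_def)
  then show ?thesis
    using that[of "length I + L"] tau_star_eq_sum_lessThan by blast
qed

lemma power_le_abs_sum_powers:
  fixes c :: "nat \<Rightarrow> int" and p :: int
  assumes "p > 1" "\<forall>j<m. c j = 0" "c m \<noteq> 0" "\<bar>c m\<bar> < p" "m < N"
  shows "p ^ m \<le> \<bar>\<Sum>j<N. c j * p ^ j\<bar>"
proof -
  let ?S = "\<Sum>j<N. c j * p ^ j" and ?R = "\<Sum>j\<in>{..<N} - {m}. c j * p ^ j"
  have "p ^ m dvd c j * p ^ j" for j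
    by (cases "j < m") (simp_all add: assms(2) dvd_mult le_imp_power_dvd)
  moreover have "p ^ Suc m dvd c j * p ^ j" if "j \<noteq> m" for j
    using that by (cases "j < m") (simp_all add: assms(2) dvd_mult le_imp_power_dvd del: power_Suc)
  ultimately have S: "p ^ m dvd ?S" and R: "p ^ Suc m dvd ?R"
    by (auto intro: dvd_sum)
  have "?S \<noteq> 0"
  proof
    assume "?S = 0"
    moreover have "?S = c m * p ^ m + ?R"
      using assms(5) by (simp add: sum.remove)
    ultimately have "c m * p ^ m = - ?R" by simp
    with R have "p ^ Suc m dvd c m * p ^ m" by simp
    then have "p dvd c m"
      using assms(1) by (simp add: mult.commute)
    then have "\<bar>p\<bar> \<le> \<bar>c m\<bar>"
      using assms(3) by (rule_tac dvd_imp_le_int) auto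
    with assms(1,4) show False by simp
  qed
  with S have "\<bar>p ^ m\<bar> \<le> \<bar>?S\<bar>" by (rule_tac dvd_imp_le_int) auto
  with assms(1) show ?thesis by simp
qed

lemma regular_mapping_pref_Suc_neq:
  assumes "regular_mapping p q \<tau>" "0 < q" "I \<in> words q" "J \<in> words q"
    and "digit I m \<noteq> digit J m"
  shows "\<tau> (pref I (Suc m)) \<noteq> \<tau> (pref J (Suc m))"
proof -
  have "\<tau> (pref K (Suc m)) mod int q = int (digit K m) mod int q" if "K \<in> words q" for K
    using assms(1,2) pref_Suc_in_words[OF that] last_pref_Suc[of K m]
    unfolding regular_mapping_def by auto
  moreover have "int (digit I m) mod int q \<noteq> int (digit J m) mod int q"
    using digit_less[OF assms(3,2), of m] digit_less[OF assms(4,2), of m] assms(5) by simp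
  ultimately show ?thesis using assms(3,4) by metis
qed

lemma Gamma_first_digit_difference:
  assumes "I \<in> Gamma q" "J \<in> Gamma q" "I \<noteq> J" "pref I k = pref J k"
  obtains m where "k \<le> m" "digit I m \<noteq> digit J m" "\<And>j. j < m \<Longrightarrow> digit I j = digit J j"
proof -
  have "\<exists>j. digit I j \<noteq> digit J j" using Gamma_eq_if_digit_eq assms(1-3) by blast
  define m where "m = (LEAST j. digit I j \<noteq> digit J j)"
  have "digit I m \<noteq> digit J m"
    unfolding m_def by (rule LeastI_ex) fact
  moreover from this have "k \<le> m"
    using assms(4) by (meson not_le pref_eq_iff_digit)
  moreover have "digit I j = digit J j" if "j < m" for j
    using not_less_Least[of j "\<lambda>j. digit I j \<noteq> digit J j"] that by (simp add: m_def)
  ultimately show ?thesis using that by blast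
qed

lemma regular_mapping_tau_star_dist:
  assumes "0 < q" "1 < p" and reg: "regular_mapping p q \<tau>"
    and IJ: "I \<in> Gamma q" "J \<in> Gamma q" "I \<noteq> J" and pk: "pref I k = pref J k"
  shows "int p ^ k \<le> \<bar>tau_star p \<tau> I - tau_star p \<tau> J\<bar>"
proof -
  have W: "I \<in> words q" "J \<in> words q" using IJ Gamma_subset_words[OF assms(1)] by auto
  obtain m where km: "k \<le> m" and dm: "digit I m \<noteq> digit J m"
    and before: "\<And>j. j < m \<Longrightarrow> digit I j = digit J j"
    using Gamma_first_digit_difference[OF IJ pk] by blast
  define c where "c j = \<tau> (pref I (Suc j)) - \<tau> (pref J (Suc j))" for j
  have "c j = 0" if "j < m" for j
  proof -
    have "pref I (Suc j) = pref J (Suc j)"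
      using before that by (auto simp: pref_eq_iff_digit)
    then show ?thesis by (simp add: c_def)
  qed
  moreover have "c m \<noteq> 0"
    using regular_mapping_pref_Suc_neq[OF reg assms(1) W dm] by (simp add: c_def)
  moreover have "\<bar>c m\<bar> < int p"
  proof -
    have "\<tau> (pref K (Suc m)) \<in> {-1 .. int p - 2}" if "K \<in> words q" for K
      using reg pref_Suc_in_words[OF that assms(1)] unfolding regular_mapping_def by blast
    from this[OF W(1)] this[OF W(2)] show ?thesis by (auto simp: c_def abs_if)
  qed
  moreover obtain NI NJ where
    NI: "\<And>N. N \<ge> NI \<Longrightarrow> tau_star p \<tau> I = (\<Sum>j<N. \<tau> (pref I (Suc j)) * int p ^ j)" and
    NJ: "\<And>N. N \<ge> NJ \<Longrightarrow> tau_star p \<tau> J = (\<Sum>j<N. \<tau> (pref J (Suc j)) * int p ^ j)"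
    using regular_mapping_eventually_tau_star_eq_sum[OF reg] W by metis
  define N where "N = max (max NI NJ) (Suc m)"
  have "tau_star p \<tau> I - tau_star p \<tau> J = (\<Sum>j<N. c j * int p ^ j)"
    using NI[of N] NJ[of N] by (simp add: N_def c_def sum_subtractf left_diff_distrib)
  ultimately have "int p ^ m \<le> \<bar>tau_star p \<tau> I - tau_star p \<tau> J\<bar>"
    using power_le_abs_sum_powers[of "int p" m c N] assms(2) by (simp add: N_def)
  moreover have "int p ^ k \<le> int p ^ m" using km assms(2) by (intro power_increasing) auto
  ultimately show ?thesis by simp
qed

theorem lemma2p2:
  fixes p q :: nat and \<tau> :: "nat list \<Rightarrow> int"
  assumes "2 \<le> q" and "q < p" and "regular_mapping p q \<tau>"
  shows "bij_betw (tau_star p \<tau>) (Gamma q) (Lambda p q \<tau>) \<and>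
    (\<forall>I\<in>Gamma q. \<forall>J\<in>Gamma q. \<forall>k::nat. I \<noteq> J \<and> pref I k = pref J k \<longrightarrow>
        \<bar>tau_star p \<tau> I - tau_star p \<tau> J\<bar> \<ge> int p ^ k)"
proof (intro conjI ballI allI impI)
  have "0 < q" "1 < p" using assms(1,2) by auto
  show dist: "\<bar>tau_star p \<tau> I - tau_star p \<tau> J\<bar> \<ge> int p ^ k"
    if "I \<in> Gamma q" "J \<in> Gamma q" "I \<noteq> J \<and> pref I k = pref J k" for I J k
    using regular_mapping_tau_star_dist[OF \<open>0 < q\<close> \<open>1 < p\<close> assms(3)] that by blast
  have "inj_on (tau_star p \<tau>) (Gamma q)"
  proof (rule inj_onI, rule ccontr)
    fix I J assume "I \<in> Gamma q" "J \<in> Gamma q" "tau_star p \<tau> I = tau_star p \<tau> J" "I \<noteq> J"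
    with dist[of I J 0] show False by (simp add: pref_def)
  qed
  moreover have "tau_star p \<tau> ` Gamma q = Lambda p q \<tau>"
  proof
    show "tau_star p \<tau> ` Gamma q \<subseteq> Lambda p q \<tau>"
      using Gamma_subset_words[OF \<open>0 < q\<close>] by (auto simp: Lambda_def)
    show "Lambda p q \<tau> \<subseteq> tau_star p \<tau> ` Gamma q"
    proof
      fix y assume "y \<in> Lambda p q \<tau>"
      then obtain I where "I \<in> words q" "y = tau_star p \<tau> I" by (auto simp: Lambda_def)
      with ex_Gamma_same_digits tau_star_cong_digit show "y \<in> tau_star p \<tau> ` Gamma q"
        by (metis image_eqI)
    qed
  qed
  ultimately show "bij_betw (tau_star p \<tau>) (Gamma q) (Lambda p q \<tau>)"
    by (simp add: bij_betw_def)
qed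

end
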